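(* Suppose the embedded jump chain is recurrent. Let $f\in\mathrm{Dom}_+(\Gamma)$ be strictly positive with $\sup_{x\in\mathbb X}f(x)=b<\infty$, and assume that for every $a$ with $0<a<b$ the sublevel set $\{f\le a\}$ is finite. Let $g:[0,b]\to[0,\infty)$ be increasing with $B:=\int_0^b\frac{dy}{g(y)}<\infty$. Fix $a\in(0,b)$. If $\Gamma f(x)\le-g(f(x))$ for all $x\notin\{f\le a\}$, then $\mathbb E_x\tau_{\{f\le a\}}\le B$ for all $x\notin\{f\le a\}$ (i.e.\ the chain implodes towards $\{f\le a\}$).
   Context: Let $\mathbb X$ be a countably infinite set and $\Gamma=(\Gamma_{xy})_{x,y\in\mathbb X}$ a matrix with $\Gamma_{xy}\ge0$ for $y\ne x$, $\gamma_x:=\sum_{y\ne x}\Gamma_{xy}$, $\Gamma_{xx}=-\gamma_x$, and $0<\gamma_x<\infty$ for all $x$. Let $P_{xy}=\Gamma_{xy}/\gamma_x$ for $y\neq x$ and $P_{xx}=0$; the discrete-time chain $(\tilde\xi_n)$ with transition matrix $P$ (embedded jump chain) is assumed irreducible. The continuous-time Markov chain $(\xi_t)_{t\ge0}$ with generator $\Gamma$: conditionally on $\tilde\xi$, holding times $\sigma_n$ ($n\ge1$) are independent exponential with parameter $\gamma_{\tilde\xi_{n-1}}$; $J_0=0$, $J_n=\sigma_1+\dots+\sigma_n$, $\zeta=\lim_nJ_n$; $\xi_t=\tilde\xi_n$ on $[J_n,J_{n+1})$, $\xi_t=\partial$ for $t\ge\zeta$. $\mathbb E_x$ refers to $\xi_0=x$;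 $\tau_A=\inf\{t\ge0:\xi_t\in A\}$. $\mathrm{Dom}(\Gamma)=\{f:\mathbb X\to\mathbb R:\ \sum_{y\ne x}\Gamma_{xy}|f(y)|<\infty\ \forall x\}$, $\mathrm{Dom}_+(\Gamma)$ its non-negative elements, $\Gamma f(x)=\sum_{y}\Gamma_{xy}f(y)$. $\{f\le a\}:=\{x:f(x)\le a\}$. *)

theory Defs
  imports "HOL-Probability.Probability"
begin

definition jump_rate :: "('x \<Rightarrow> 'x \<Rightarrow> real) \<Rightarrow> 'x \<Rightarrow> real" where
  "jump_rate \<Gamma> x = (\<Sum>\<^sub>\<infinity> y\<in>UNIV - {x}. \<Gamma> x y)"

definition is_Q_matrix :: "('x \<Rightarrow> 'x \<Rightarrow> real) \<Rightarrow> bool" where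
  "is_Q_matrix \<Gamma> \<longleftrightarrow>
     (\<forall>x y. x \<noteq> y \<longrightarrow> 0 \<le> \<Gamma> x y) \<and>
     (\<forall>x. (\<Gamma> x) summable_on (UNIV - {x})) \<and>
     (\<forall>x. \<Gamma> x x = - jump_rate \<Gamma> x) \<and>
     (\<forall>x. 0 < jump_rate \<Gamma> x)"

definition jumpP :: "('x \<Rightarrow> 'x \<Rightarrow> real) \<Rightarrow> 'x \<Rightarrow> 'x \<Rightarrow> real" where
  "jumpP \<Gamma> x y = (if y = x then 0 else \<Gamma> x y / jump_rate \<Gamma> x)"

definition jump_irreducible :: "('x \<Rightarrow> 'x \<Rightarrow> real) \<Rightarrow> bool" where
  "jump_irreducible \<Gamma> \<longleftrightarrow> (\<forall>x y. (x, y) \<in> {(u, v). 0 < jumpP \<Gamma> u v}\<^sup>*)"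

text \<open>First-passage probabilities of the jump chain: probability that, started at x,
  the chain visits y for the first time (at a positive time) at step n.\<close>
fun first_passage :: "('x \<Rightarrow> 'x \<Rightarrow> real) \<Rightarrow> nat \<Rightarrow> 'x \<Rightarrow> 'x \<Rightarrow> ennreal" where
  "first_passage \<Gamma> 0 x y = 0"
| "first_passage \<Gamma> (Suc n) x y =
     (if n = 0 then ennreal (jumpP \<Gamma> x y)
      else (\<Sum>\<^sub>\<infinity> z\<in>UNIV - {y}. ennreal (jumpP \<Gamma> x z) * first_passage \<Gamma> n z y))"

definition jump_recurrent :: "('x \<Rightarrow> 'x \<Rightarrow> real) \<Rightarrow> bool" where
  "jump_recurrent \<Gamma> \<longleftrightarrow> (\<forall>x. (\<Sum>n. first_passage \<Gamma> n x x) = 1)"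

definition in_Dom :: "('x \<Rightarrow> 'x \<Rightarrow> real) \<Rightarrow> ('x \<Rightarrow> real) \<Rightarrow> bool" where
  "in_Dom \<Gamma> f \<longleftrightarrow> (\<forall>x. (\<lambda>y. \<Gamma> x y * \<bar>f y\<bar>) summable_on (UNIV - {x}))"

definition in_Dom_plus :: "('x \<Rightarrow> 'x \<Rightarrow> real) \<Rightarrow> ('x \<Rightarrow> real) \<Rightarrow> bool" where
  "in_Dom_plus \<Gamma> f \<longleftrightarrow> in_Dom \<Gamma> f \<and> (\<forall>x. 0 \<le> f x)"

definition gen_apply :: "('x \<Rightarrow> 'x \<Rightarrow> real) \<Rightarrow> ('x \<Rightarrow> real) \<Rightarrow> 'x \<Rightarrow> real" where
  "gen_apply \<Gamma> f x = (\<Sum>\<^sub>\<infinity> y\<in>UNIV - {x}. \<Gamma> x y * f y) + \<Gamma> x x * f x"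

text \<open>X n = embedded jump chain at step n; S n (n \<ge> 1) = n-th holding time sigma_n.
  The assumption fixes the joint law of (X_0..X_n, S_1..S_n) for every n:
  started at x0, jump chain with matrix P, and conditionally independent
  exponential holding times with parameter gamma(X_(k-1)).\<close>
definition ctmc_law ::
  "'w measure \<Rightarrow> (nat \<Rightarrow> 'w \<Rightarrow> 'x) \<Rightarrow> (nat \<Rightarrow> 'w \<Rightarrow> real) \<Rightarrow> ('x \<Rightarrow> 'x \<Rightarrow> real) \<Rightarrow> 'x \<Rightarrow> bool" where
  "ctmc_law M X S \<Gamma> x0 \<longleftrightarrow>
     prob_space M \<and>
     (\<forall>n. X n \<in> measurable M (count_space UNIV)) \<and>
     (\<forall>n. S n \<in> borel_measurable M) \<and>
     (\<forall>n (xs :: nat \<Rightarrow> 'x) (ts :: nat \<Rightarrow> real). (\<forall>k. 0 \<le> ts k) \<longrightarrow>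
        measure M {\<omega> \<in> space M. (\<forall>k\<le>n. X k \<omega> = xs k) \<and> (\<forall>k\<in>{1..n}. ts k < S k \<omega>)}
        = (if xs 0 = x0 then 1 else 0) *
          (\<Prod>k\<in>{1..n}. jumpP \<Gamma> (xs (k - 1)) (xs k) * exp (- jump_rate \<Gamma> (xs (k - 1)) * ts k)))"

definition jump_time :: "(nat \<Rightarrow> 'w \<Rightarrow> real) \<Rightarrow> nat \<Rightarrow> 'w \<Rightarrow> real" where
  "jump_time S n \<omega> = (\<Sum>k\<in>{1..n}. S k \<omega>)"

text \<open>State at time t; None plays the role of the cemetery state (t \<ge> zeta).\<close>
definition ctmc_state :: "(nat \<Rightarrow> 'w \<Rightarrow> 'x) \<Rightarrow> (nat \<Rightarrow> 'w \<Rightarrow> real) \<Rightarrow> real \<Rightarrow> 'w \<Rightarrow> 'x option" where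
  "ctmc_state X S t \<omega> =
     (if \<exists>n. jump_time S n \<omega> \<le> t \<and> t < jump_time S (Suc n) \<omega>
      then Some (X (LEAST n. jump_time S n \<omega> \<le> t \<and> t < jump_time S (Suc n) \<omega>) \<omega>)
      else None)"

definition hit_time :: "(nat \<Rightarrow> 'w \<Rightarrow> 'x) \<Rightarrow> (nat \<Rightarrow> 'w \<Rightarrow> real) \<Rightarrow> 'x set \<Rightarrow> 'w \<Rightarrow> ennreal" where
  "hit_time X S A \<omega> = Inf {ennreal t | t. 0 \<le> t \<and> ctmc_state X S t \<omega> \<in> Some ` A}"

end

theory Submission
  imports Defs
begin

text \<open>Write \<open>\<Phi>(u) = \<integral>\<^sub>0\<^sup>u dy / g(y)\<close> and \<open>T = {f > a}\<close>. As \<open>1/g\<close> is decreasing, \<open>\<Phi>\<close> is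
  concave, and with the tangent line of \<open>\<Phi>\<close> at \<open>f(y)\<close> the hypothesis \<open>\<Gamma>f \<le> -g(f)\<close> becomes the
  drift inequality \<open>1/\<gamma>(y) + \<Sum>\<^sub>z P(y,z) \<Phi>(f(z)) \<le> \<Phi>(f(y))\<close> on \<open>T\<close>: the mean holding time at
  \<open>y\<close> plus the mean of \<open>\<Phi> \<circ> f\<close> after one jump. Iterating it along the jump chain killed on
  leaving \<open>T\<close> bounds the expected total holding time spent in \<open>T\<close> by \<open>\<Phi>(f(x)) \<le> \<Phi>(b) = B\<close>.
  The same bound makes the expected number of returns to \<open>x\<close> before leaving \<open>T\<close> finite; with
  recurrence of the jump chain this forces the chain to leave \<open>T\<close> almost surely, so the total
  holding time in \<open>T\<close> dominates the hitting time of \<open>{f \<le> a}\<close>.\<close>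

lemma nn_integral_count_space_eq_infsum:
  fixes f :: "'a \<Rightarrow> real"
  assumes "f summable_on A" "\<And>x. x \<in> A \<Longrightarrow> 0 \<le> f x"
  shows "(\<integral>\<^sup>+x. ennreal (f x) \<partial>count_space A) = ennreal (infsum f A)"
proof -
  have "(\<lambda>x. norm (f x)) summable_on A"
    using assms by (subst summable_on_cong[where g=f]) auto
  then have "Infinite_Sum.abs_summable_on f A" by simp
  then have abs: "Infinite_Set_Sum.abs_summable_on f A"
    using abs_summable_equivalent by blast
  show ?thesis
    using nn_integral_conv_infsetsum[OF abs] infsetsum_infsum[OF abs] assms by simp
qed

lemma infsum_ennreal_eq_nn_integral:
  fixes f :: "'a \<Rightarrow> ennreal"
  assumes "countable A"
  shows "infsum f A = (\<integral>\<^sup>+x. f x \<partial>count_space A)"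
proof (cases "finite A")
  case True
  then show ?thesis by (simp add: nn_integral_count_space_finite)
next
  case False
  note bij = bij_betw_from_nat_into[OF assms False]
  have "(\<integral>\<^sup>+x. f x \<partial>count_space A) = (\<integral>\<^sup>+n. f (from_nat_into A n) \<partial>count_space UNIV)"
    by (rule nn_integral_bij_count_space[OF bij, symmetric])
  also have "\<dots> = (\<Sum>n. f (from_nat_into A n))"
    by (rule nn_integral_count_space_nat)
  also have "\<dots> = infsum (\<lambda>n. f (from_nat_into A n)) UNIV"
    by (intro sums_unique[symmetric] has_sum_imp_sums has_sum_infsum nonneg_summable_on_complete) simp
  also have "\<dots> = infsum f A"
    by (rule infsum_reindex_bij_betw[OF bij])
  finally show ?thesis ..
qed

lemma nn_integral_count_space_swap:
  fixes F :: "'a::countable \<Rightarrow> 'b::countable \<Rightarrow> ennreal"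
  shows "(\<integral>\<^sup>+x. \<integral>\<^sup>+y. F x y \<partial>count_space UNIV \<partial>count_space UNIV)
       = (\<integral>\<^sup>+y. \<integral>\<^sup>+x. F x y \<partial>count_space UNIV \<partial>count_space UNIV)"
  using nn_integral_count_space_nn_integral[of UNIV "\<lambda>y x. F x y" "count_space UNIV"]
  by simp

lemma nn_integral_count_space_indicator_singleton:
  "(\<integral>\<^sup>+z. indicator {x} z * F z \<partial>count_space UNIV) = F x"
  "(\<integral>\<^sup>+z. F z * indicator {x} z \<partial>count_space UNIV) = F x"
  by (subst nn_integral_count_space'[where A="{x}"]; auto)+

lemma ennreal_convolution_tendsto_0:
  fixes G s :: "nat \<Rightarrow> ennreal"
  assumes G: "(\<Sum>j. G j) < \<top>" and s_le: "\<And>n. s n \<le> 1" and s: "s \<longlonglongrightarrow> 0"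
  shows "(\<lambda>n. \<Sum>j\<le>n. G j * s (n - j)) \<longlonglongrightarrow> 0"
proof -
  define u where "u n j = (if j \<le> n then G j * s (n - j) else 0)" for n j
  have "(\<lambda>n. \<integral>\<^sup>+j. u n j \<partial>count_space UNIV) \<longlonglongrightarrow> (\<integral>\<^sup>+(j::nat). 0 \<partial>count_space UNIV)"
  proof (rule nn_integral_dominated_convergence[where w=G])
    show "AE j in count_space UNIV. u n j \<le> G j" for n
      using s_le by (auto simp: u_def intro!: AE_I2) (metis mult.right_neutral mult_left_mono zero_le)
    show "(\<integral>\<^sup>+j. G j \<partial>count_space UNIV) < \<infinity>"
      using G by (simp add: nn_integral_count_space_nat)
    show "AE j in count_space UNIV. (\<lambda>n. u n j) \<longlonglongrightarrow> 0"
    proof (rule AE_I2)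
      fix j
      have "(\<lambda>n. G j * s n) \<longlonglongrightarrow> G j * 0"
        using ennreal_suminf_lessD[OF G] s by (rule ennreal_tendsto_cmult)
      then have "(\<lambda>n. u (n + j) j) \<longlonglongrightarrow> 0" by (simp add: u_def)
      then show "(\<lambda>n. u n j) \<longlonglongrightarrow> 0" by (rule LIMSEQ_offset)
    qed
  qed auto
  moreover have "(\<integral>\<^sup>+j. u n j \<partial>count_space UNIV) = (\<Sum>j\<le>n. G j * s (n - j))" for n
    by (subst nn_integral_count_space'[where A="{..n}"]) (auto simp: u_def)
  ultimately show ?thesis by simp
qed

lemma ball_atMost_Suc: "(\<forall>k\<le>Suc n. P k) \<longleftrightarrow> (\<forall>k\<le>n. P k) \<and> P (Suc n)"
  by (auto simp: le_Suc_eq)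

lemma ball_atLeastAtMost_Suc: "(\<forall>k\<in>{1..Suc n}. P k) \<longleftrightarrow> (\<forall>k\<in>{1..n}. P k) \<and> P (Suc n)"
  by (auto simp: atLeastAtMostSuc_conv)

lemma nn_integral_exp_neg_Ici:
  assumes "0 < (l::real)"
  shows "(\<integral>\<^sup>+t. ennreal (indicator {0..} t * exp (- l * t)) \<partial>lborel) = ennreal (1 / l)"
proof -
  let ?I = "\<integral>\<^sup>+t. ennreal (indicator {0..} t * exp (- l * t)) \<partial>lborel"
  interpret D: prob_space "density lborel (exponential_density l)"
    by (rule prob_space_exponential_density[OF assms])
  have "1 = (\<integral>\<^sup>+t. ennreal (exponential_density l t) \<partial>lborel)"
    using D.emeasure_space_1 by (simp add: emeasure_density)
  also have "\<dots> = (\<integral>\<^sup>+t. ennreal l * ennreal (indicator {0..} t * exp (- l * t)) \<partial>lborel)"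
    using assms by (intro nn_integral_cong)
      (auto simp: exponential_density_def ennreal_mult[symmetric] mult_ac split: split_indicator)
  also have "\<dots> = ennreal l * ?I"
    by (rule nn_integral_cmult) auto
  finally have "ennreal (1 / l) * (ennreal l * ?I) = ennreal (1 / l)"
    by simp
  moreover have "ennreal (1 / l) * ennreal l = 1"
    using assms by (simp add: ennreal_mult[symmetric])
  ultimately show ?thesis
    by (simp add: mult.assoc[symmetric])
qed

lemma ennreal_eq_nn_integral_indicator: "ennreal s = (\<integral>\<^sup>+t. indicator {0..<s} t \<partial>lborel)"
  by (cases "0 \<le> s") (simp_all add: ennreal_neg)

lemma nn_integral_indicator_eq_tail_integral:
  assumes "sigma_finite_measure M" "h \<in> borel_measurable M" "A \<in> sets M"
  shows "(\<integral>\<^sup>+\<omega>. ennreal (h \<omega>) * indicator A \<omega> \<partial>M)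
       = (\<integral>\<^sup>+t. indicator {0..} t * emeasure M (A \<inter> {\<omega>. t < h \<omega>}) \<partial>lborel)"
proof -
  interpret pair_sigma_finite M lborel
    using assms(1) sigma_finite_lborel by (auto simp: pair_sigma_finite_def)
  note [measurable] = assms(2,3)
  define F :: "'a \<Rightarrow> real \<Rightarrow> ennreal"
    where "F \<omega> t = (if 0 \<le> t \<and> t < h \<omega> \<and> \<omega> \<in> A then 1 else 0)" for \<omega> t
  have F_measurable: "case_prod F \<in> borel_measurable (M \<Otimes>\<^sub>M lborel)"
    unfolding F_def by measurable
  have "ennreal (h \<omega>) * indicator A \<omega> = (\<integral>\<^sup>+t. F \<omega> t \<partial>lborel)" for \<omega>
  proof -
    have "ennreal (h \<omega>) * indicator A \<omega> = (\<integral>\<^sup>+t. indicator {0..<h \<omega>} t * indicator A \<omega> \<partial>lborel)"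
      by (subst ennreal_eq_nn_integral_indicator) (simp add: nn_integral_multc)
    also have "\<dots> = (\<integral>\<^sup>+t. F \<omega> t \<partial>lborel)"
      by (intro nn_integral_cong) (auto simp: F_def split: split_indicator)
    finally show ?thesis .
  qed
  then have "(\<integral>\<^sup>+\<omega>. ennreal (h \<omega>) * indicator A \<omega> \<partial>M) = (\<integral>\<^sup>+\<omega>. \<integral>\<^sup>+t. F \<omega> t \<partial>lborel \<partial>M)"
    by simp
  also have "\<dots> = (\<integral>\<^sup>+t. \<integral>\<^sup>+\<omega>. F \<omega> t \<partial>M \<partial>lborel)"
    by (rule Fubini'[OF F_measurable, symmetric])
  also have "\<dots> = (\<integral>\<^sup>+t. indicator {0..} t * emeasure M (A \<inter> {\<omega>. t < h \<omega>}) \<partial>lborel)"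
  proof (intro nn_integral_cong)
    fix t :: real
    have A_t: "A \<inter> {\<omega>. t < h \<omega>} = A \<inter> {\<omega> \<in> space M. t < h \<omega>}"
      using sets.sets_into_space[OF assms(3)] by auto
    show "(\<integral>\<^sup>+\<omega>. F \<omega> t \<partial>M) = indicator {0..} t * emeasure M (A \<inter> {\<omega>. t < h \<omega>})"
    proof (cases "0 \<le> t")
      case True
      then have "(\<integral>\<^sup>+\<omega>. F \<omega> t \<partial>M) = (\<integral>\<^sup>+\<omega>. indicator (A \<inter> {\<omega> \<in> space M. t < h \<omega>}) \<omega> \<partial>M)"
        by (intro nn_integral_cong) (auto simp: F_def split: split_indicator)
      then show ?thesis
        using True by (simp add: A_t)
    qed (simp add: F_def)
  qed
  finally show ?thesis .
qed

section \<open>Taboo probabilities of the jump chain\<close>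

locale Q_matrix =
  fixes \<Gamma> :: "'x::countable \<Rightarrow> 'x \<Rightarrow> real"
  assumes Q: "is_Q_matrix \<Gamma>"
begin

definition jump_prob :: "'x \<Rightarrow> 'x \<Rightarrow> ennreal" where
  "jump_prob y z = ennreal (jumpP \<Gamma> y z)"

lemma jump_rate_pos: "0 < jump_rate \<Gamma> y"
  using Q by (simp add: is_Q_matrix_def)

lemma off_diagonal_nonneg: "y \<noteq> z \<Longrightarrow> 0 \<le> \<Gamma> y z"
  using Q by (simp add: is_Q_matrix_def)

lemma row_summable: "(\<Gamma> y) summable_on (UNIV - {y})"
  using Q by (simp add: is_Q_matrix_def)

lemma jumpP_nonneg: "0 \<le> jumpP \<Gamma> y z"
  using jump_rate_pos[of y] off_diagonal_nonneg[of y z] by (simp add: jumpP_def)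

lemma nn_integral_jumpP:
  assumes "(\<lambda>z. \<Gamma> y z * h z) summable_on (UNIV - {y})" "\<And>z. 0 \<le> h z"
  shows "(\<integral>\<^sup>+z. ennreal (jumpP \<Gamma> y z * h z) \<partial>count_space UNIV)
       = ennreal ((\<Sum>\<^sub>\<infinity>z\<in>UNIV - {y}. \<Gamma> y z * h z) / jump_rate \<Gamma> y)"
proof -
  have "(\<integral>\<^sup>+z. ennreal (jumpP \<Gamma> y z * h z) \<partial>count_space UNIV)
      = (\<integral>\<^sup>+z. ennreal (\<Gamma> y z * h z * (1 / jump_rate \<Gamma> y)) \<partial>count_space (UNIV - {y}))"
    by (subst nn_integral_count_space_eq[where B="UNIV - {y}"])
      (auto simp: jumpP_def intro!: nn_integral_cong)
  also have "\<dots> = ennreal (\<Sum>\<^sub>\<infinity>z\<in>UNIV - {y}. \<Gamma> y z * h z * (1 / jump_rate \<Gamma> y))"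
    using assms jump_rate_pos[of y] off_diagonal_nonneg[of y]
    by (intro nn_integral_count_space_eq_infsum summable_on_cmult_left) auto
  also have "\<dots> = ennreal ((\<Sum>\<^sub>\<infinity>z\<in>UNIV - {y}. \<Gamma> y z * h z) / jump_rate \<Gamma> y)"
    using assms by (subst infsum_cmult_left) auto
  finally show ?thesis .
qed

lemma jump_prob_row_sum: "(\<integral>\<^sup>+z. jump_prob y z \<partial>count_space UNIV) = 1"
  using nn_integral_jumpP[of y "\<lambda>_. 1"] row_summable[of y] jump_rate_pos[of y]
  by (simp add: jump_prob_def jump_rate_def)

text \<open>\<open>taboo x0 T n z\<close> is the probability that the jump chain started at \<open>x0\<close> is at \<open>z\<close> at step
  \<open>n\<close>, having visited only states of \<open>T\<close> at steps \<open>1, \<dots>, n\<close>.\<close>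

fun taboo :: "'x \<Rightarrow> 'x set \<Rightarrow> nat \<Rightarrow> 'x \<Rightarrow> ennreal" where
  "taboo x0 T 0 z = indicator {x0} z"
| "taboo x0 T (Suc n) z = indicator T z * (\<integral>\<^sup>+w. taboo x0 T n w * jump_prob w z \<partial>count_space UNIV)"

lemma taboo_mono_set: "T' \<subseteq> T \<Longrightarrow> taboo x0 T' n z \<le> taboo x0 T n z"
proof (induction n arbitrary: z)
  case (Suc n)
  have "(\<integral>\<^sup>+w. taboo x0 T' n w * jump_prob w z \<partial>count_space UNIV)
      \<le> (\<integral>\<^sup>+w. taboo x0 T n w * jump_prob w z \<partial>count_space UNIV)"
    using Suc by (intro nn_integral_mono mult_right_mono) auto
  moreover have "indicator T' z \<le> (indicator T z :: ennreal)"
    using Suc.prems by (auto split: split_indicator)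
  ultimately show ?case by (simp add: mult_mono)
qed simp

lemma taboo_mass_Suc:
  "(\<integral>\<^sup>+z. taboo x0 T (Suc n) z \<partial>count_space UNIV)
   = (\<integral>\<^sup>+w. taboo x0 T n w * (\<integral>\<^sup>+z. indicator T z * jump_prob w z \<partial>count_space UNIV) \<partial>count_space UNIV)"
proof -
  have "(\<integral>\<^sup>+z. taboo x0 T (Suc n) z \<partial>count_space UNIV)
     = (\<integral>\<^sup>+z. \<integral>\<^sup>+w. indicator T z * (taboo x0 T n w * jump_prob w z) \<partial>count_space UNIV \<partial>count_space UNIV)"
    by (simp add: nn_integral_cmult)
  also have "\<dots> = (\<integral>\<^sup>+w. \<integral>\<^sup>+z. taboo x0 T n w * (indicator T z * jump_prob w z) \<partial>count_space UNIV \<partial>count_space UNIV)"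
    by (subst nn_integral_count_space_swap) (simp add: mult_ac)
  also have "\<dots> = (\<integral>\<^sup>+w. taboo x0 T n w * (\<integral>\<^sup>+z. indicator T z * jump_prob w z \<partial>count_space UNIV) \<partial>count_space UNIV)"
    by (simp add: nn_integral_cmult)
  finally show ?thesis .
qed

lemma taboo_UNIV_mass: "(\<integral>\<^sup>+z. taboo x0 UNIV n z \<partial>count_space UNIV) = 1"
  by (induction n)
    (simp_all add: taboo_mass_Suc jump_prob_row_sum nn_integral_count_space_indicator_singleton
      del: taboo.simps(2))

lemma taboo_last_visit_step:
  assumes "x0 \<in> T"
  shows "indicator T z * (\<integral>\<^sup>+w. taboo x0 (T - {x0}) m w * jump_prob w z \<partial>count_space UNIV)
       = taboo x0 (T - {x0}) (Suc m) z
         + indicator {x0} z * (\<integral>\<^sup>+w. taboo x0 (T - {x0}) m w * jump_prob w x0 \<partial>count_space UNIV)"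
  using assms by (cases "z = x0"; cases "z \<in> T") auto

lemma taboo_last_visit:
  assumes "x0 \<in> T"
  shows "taboo x0 T n z = (\<Sum>j\<le>n. taboo x0 T j x0 * taboo x0 (T - {x0}) (n - j) z)"
proof (induction n arbitrary: z)
  case 0
  then show ?case by (simp split: split_indicator)
next
  case (Suc n)
  define s where "s = taboo x0 (T - {x0})"
  define c where "c m = (\<integral>\<^sup>+w. s m w * jump_prob w x0 \<partial>count_space UNIV)" for m
  have split: "taboo x0 T (Suc n) z' = (\<Sum>j\<le>n. taboo x0 T j x0 * s (Suc n - j) z')
            + indicator {x0} z' * (\<Sum>j\<le>n. taboo x0 T j x0 * c (n - j))" for z'
  proof -
    have "taboo x0 T (Suc n) z' = indicator T z' *
            (\<integral>\<^sup>+w. (\<Sum>j\<le>n. taboo x0 T j x0 * s (n - j) w) * jump_prob w z' \<partial>count_space UNIV)"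
      using Suc.IH by (simp add: s_def)
    also have "\<dots> = indicator T z' *
            (\<Sum>j\<le>n. taboo x0 T j x0 * (\<integral>\<^sup>+w. s (n - j) w * jump_prob w z' \<partial>count_space UNIV))"
      by (simp add: sum_distrib_right nn_integral_sum nn_integral_cmult mult.assoc)
    also have "\<dots> = (\<Sum>j\<le>n. taboo x0 T j x0 *
            (indicator T z' * (\<integral>\<^sup>+w. s (n - j) w * jump_prob w z' \<partial>count_space UNIV)))"
      by (simp add: sum_distrib_left mult_ac)
    also have "\<dots> = (\<Sum>j\<le>n. taboo x0 T j x0 * (s (Suc (n - j)) z' + indicator {x0} z' * c (n - j)))"
      unfolding s_def c_def by (simp only: taboo_last_visit_step[OF assms])
    also have "\<dots> = (\<Sum>j\<le>n. taboo x0 T j x0 * s (Suc n - j) z')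
            + indicator {x0} z' * (\<Sum>j\<le>n. taboo x0 T j x0 * c (n - j))"
      by (simp add: distrib_left sum.distrib sum_distrib_left Suc_diff_le mult_ac)
    finally show ?thesis .
  qed
  have "s (Suc n - j) x0 = 0" if "j \<le> n" for j
    using that by (simp add: s_def Suc_diff_le)
  then have "taboo x0 T (Suc n) x0 = (\<Sum>j\<le>n. taboo x0 T j x0 * c (n - j))"
    using split[of x0] by simp
  then have "taboo x0 T (Suc n) z = (\<Sum>j\<le>n. taboo x0 T j x0 * s (Suc n - j) z)
            + indicator {x0} z * taboo x0 T (Suc n) x0"
    using split[of z] by simp
  also have "\<dots> = (\<Sum>j\<le>Suc n. taboo x0 T j x0 * s (Suc n - j) z)"
    by (simp add: s_def mult.commute)
  finally show ?case by (simp add: s_def)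
qed

lemma first_passage_Suc_Suc:
  "first_passage \<Gamma> (Suc (Suc k)) z y
   = (\<integral>\<^sup>+w. indicator (- {y}) w * jump_prob z w * first_passage \<Gamma> (Suc k) w y \<partial>count_space UNIV)"
proof -
  have "first_passage \<Gamma> (Suc (Suc k)) z y
      = (\<integral>\<^sup>+w. ennreal (jumpP \<Gamma> z w) * first_passage \<Gamma> (Suc k) w y \<partial>count_space (UNIV - {y}))"
    by (simp add: infsum_ennreal_eq_nn_integral)
  also have "\<dots> = (\<integral>\<^sup>+w. indicator (- {y}) w * jump_prob z w * first_passage \<Gamma> (Suc k) w y \<partial>count_space UNIV)"
    by (subst nn_integral_count_space_indicator)
      (auto simp: jump_prob_def Compl_eq_Diff_UNIV intro!: nn_integral_cong split: split_indicator)
  finally show ?thesis .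
qed

lemma taboo_first_passage:
  "(\<integral>\<^sup>+z. taboo x0 (- {x0}) m z * first_passage \<Gamma> (Suc k) z x0 \<partial>count_space UNIV)
   = (\<integral>\<^sup>+w. taboo x0 (- {x0}) (m + k) w * jump_prob w x0 \<partial>count_space UNIV)"
proof (induction k arbitrary: m)
  case 0
  then show ?case by (simp add: jump_prob_def)
next
  case (Suc k)
  let ?t = "taboo x0 (- {x0})" and ?F = "\<lambda>w. indicator (- {x0}) w * first_passage \<Gamma> (Suc k) w x0"
  have "(\<integral>\<^sup>+z. ?t m z * first_passage \<Gamma> (Suc (Suc k)) z x0 \<partial>count_space UNIV)
     = (\<integral>\<^sup>+z. \<integral>\<^sup>+w. ?t m z * (indicator (- {x0}) w * jump_prob z w * first_passage \<Gamma> (Suc k) w x0) \<partial>count_space UNIV \<partial>count_space UNIV)"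
    by (simp add: first_passage_Suc_Suc nn_integral_cmult del: first_passage.simps)
  also have "\<dots> = (\<integral>\<^sup>+w. \<integral>\<^sup>+z. ?F w * (?t m z * jump_prob z w) \<partial>count_space UNIV \<partial>count_space UNIV)"
    by (subst nn_integral_count_space_swap) (simp add: mult_ac)
  also have "\<dots> = (\<integral>\<^sup>+w. ?F w * (\<integral>\<^sup>+z. ?t m z * jump_prob z w \<partial>count_space UNIV) \<partial>count_space UNIV)"
    by (rule nn_integral_cong) (rule nn_integral_cmult, simp)
  also have "\<dots> = (\<integral>\<^sup>+w. ?t (Suc m) w * first_passage \<Gamma> (Suc k) w x0 \<partial>count_space UNIV)"
    by (simp add: mult_ac del: first_passage.simps)
  also have "\<dots> = (\<integral>\<^sup>+w. ?t (m + Suc k) w * jump_prob w x0 \<partial>count_space UNIV)"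
    using Suc.IH[of "Suc m"] by simp
  finally show ?case .
qed

lemma first_passage_eq_taboo:
  "first_passage \<Gamma> (Suc k) x0 x0 = (\<integral>\<^sup>+w. taboo x0 (- {x0}) k w * jump_prob w x0 \<partial>count_space UNIV)"
  using taboo_first_passage[of x0 0 k]
  by (simp add: nn_integral_count_space_indicator_singleton del: first_passage.simps)

lemma taboo_avoid_mass_Suc:
  "(\<integral>\<^sup>+z. taboo x0 (- {x0}) (Suc m) z \<partial>count_space UNIV)
   + (\<integral>\<^sup>+w. taboo x0 (- {x0}) m w * jump_prob w x0 \<partial>count_space UNIV)
   = (\<integral>\<^sup>+z. taboo x0 (- {x0}) m z \<partial>count_space UNIV)"
proof -
  have split: "(\<integral>\<^sup>+z. indicator (- {x0}) z * jump_prob w z \<partial>count_space UNIV) + jump_prob w x0 = 1" for w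
  proof -
    have "(\<integral>\<^sup>+z. indicator (- {x0}) z * jump_prob w z \<partial>count_space UNIV) + jump_prob w x0
        = (\<integral>\<^sup>+z. indicator (- {x0}) z * jump_prob w z + indicator {x0} z * jump_prob w z \<partial>count_space UNIV)"
      by (simp add: nn_integral_add nn_integral_count_space_indicator_singleton)
    also have "\<dots> = (\<integral>\<^sup>+z. jump_prob w z \<partial>count_space UNIV)"
      by (rule nn_integral_cong) (auto split: split_indicator)
    finally show ?thesis by (simp add: jump_prob_row_sum)
  qed
  have "(\<integral>\<^sup>+z. taboo x0 (- {x0}) (Suc m) z \<partial>count_space UNIV)
        + (\<integral>\<^sup>+w. taboo x0 (- {x0}) m w * jump_prob w x0 \<partial>count_space UNIV)
      = (\<integral>\<^sup>+w. taboo x0 (- {x0}) m w * (\<integral>\<^sup>+z. indicator (- {x0}) z * jump_prob w z \<partial>count_space UNIV)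
          + taboo x0 (- {x0}) m w * jump_prob w x0 \<partial>count_space UNIV)"
    by (subst taboo_mass_Suc) (rule nn_integral_add[symmetric], auto)
  also have "\<dots> = (\<integral>\<^sup>+w. taboo x0 (- {x0}) m w \<partial>count_space UNIV)"
    by (rule nn_integral_cong) (simp add: distrib_left[symmetric] split)
  finally show ?thesis .
qed

lemma taboo_avoid_mass_plus_first_passage:
  "(\<integral>\<^sup>+z. taboo x0 (- {x0}) m z \<partial>count_space UNIV) + (\<Sum>j<m. first_passage \<Gamma> (Suc j) x0 x0) = 1"
proof (induction m)
  case 0
  then show ?case by (simp add: nn_integral_count_space_indicator_singleton)
next
  case (Suc m)
  have "(\<integral>\<^sup>+z. taboo x0 (- {x0}) (Suc m) z \<partial>count_space UNIV) + (\<Sum>j<Suc m. first_passage \<Gamma> (Suc j) x0 x0)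
      = ((\<integral>\<^sup>+z. taboo x0 (- {x0}) (Suc m) z \<partial>count_space UNIV)
          + (\<integral>\<^sup>+w. taboo x0 (- {x0}) m w * jump_prob w x0 \<partial>count_space UNIV))
        + (\<Sum>j<m. first_passage \<Gamma> (Suc j) x0 x0)"
    by (simp add: first_passage_eq_taboo add_ac del: taboo.simps first_passage.simps)
  also have "\<dots> = 1" by (simp only: taboo_avoid_mass_Suc Suc.IH)
  finally show ?case .
qed

lemma taboo_avoid_mass_le_1: "(\<integral>\<^sup>+z. taboo x0 (- {x0}) m z \<partial>count_space UNIV) \<le> 1"
  by (metis taboo_avoid_mass_plus_first_passage le_iff_add)

lemma taboo_avoid_mass_tendsto_0:
  assumes recurrent: "(\<Sum>n. first_passage \<Gamma> n x0 x0) = 1"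
  shows "(\<lambda>m. \<integral>\<^sup>+z. taboo x0 (- {x0}) m z \<partial>count_space UNIV) \<longlonglongrightarrow> 0"
proof -
  define p where "p m = (\<Sum>j<m. first_passage \<Gamma> (Suc j) x0 x0)" for m
  have "p m = (\<Sum>i<Suc m. first_passage \<Gamma> i x0 x0)" for m
    unfolding p_def by (subst sum.lessThan_Suc_shift) simp
  then have "(\<lambda>m. p m) \<longlonglongrightarrow> 1"
    using LIMSEQ_Suc[OF summable_LIMSEQ[of "\<lambda>i. first_passage \<Gamma> i x0 x0"]] recurrent by simp
  then have "(\<lambda>m. 1 - p m) \<longlonglongrightarrow> 1 - 1"
    by (intro tendsto_diff_ennreal tendsto_const) auto
  moreover have "(\<integral>\<^sup>+z. taboo x0 (- {x0}) m z \<partial>count_space UNIV) = 1 - p m" for m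
  proof -
    have "p m \<le> 1"
      using taboo_avoid_mass_plus_first_passage[of x0 m] unfolding p_def by (metis add.commute le_iff_add)
    then have "p m \<noteq> top" by (auto simp: top_unique)
    then show ?thesis
      using taboo_avoid_mass_plus_first_passage[of x0 m] unfolding p_def[symmetric]
      by (metis ennreal_add_diff_cancel_right)
  qed
  ultimately show ?thesis by simp
qed

definition Lyapunov_on :: "'x set \<Rightarrow> ('x \<Rightarrow> ennreal) \<Rightarrow> bool" where
  "Lyapunov_on T H \<longleftrightarrow>
     (\<forall>y\<in>T. ennreal (1 / jump_rate \<Gamma> y) + (\<integral>\<^sup>+z. jump_prob y z * H z \<partial>count_space UNIV) \<le> H y)"

text \<open>\<open>holding_time T n y\<close> is the expected sum of the first \<open>n\<close> holding times of the chain
  started at \<open>y\<close>, where the sum stops as soon as the jump chain leaves \<open>T\<close>.\<close>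

fun holding_time :: "'x set \<Rightarrow> nat \<Rightarrow> 'x \<Rightarrow> ennreal" where
  "holding_time T 0 y = 0"
| "holding_time T (Suc n) y = ennreal (1 / jump_rate \<Gamma> y)
     + (\<integral>\<^sup>+z. jump_prob y z * indicator T z * holding_time T n z \<partial>count_space UNIV)"

lemma taboo_holding_time:
  "(\<integral>\<^sup>+z. taboo x0 T m z * holding_time T n z \<partial>count_space UNIV)
   = (\<Sum>j<n. \<integral>\<^sup>+z. taboo x0 T (m + j) z * ennreal (1 / jump_rate \<Gamma> z) \<partial>count_space UNIV)"
proof (induction n arbitrary: m)
  case (Suc n)
  let ?t = "taboo x0 T m" and ?h = "\<lambda>w. indicator T w * holding_time T n w"
  have "(\<integral>\<^sup>+z. ?t z * holding_time T (Suc n) z \<partial>count_space UNIV)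
      = (\<integral>\<^sup>+z. ?t z * ennreal (1 / jump_rate \<Gamma> z) \<partial>count_space UNIV)
      + (\<integral>\<^sup>+z. \<integral>\<^sup>+w. ?h w * (?t z * jump_prob z w) \<partial>count_space UNIV \<partial>count_space UNIV)"
    by (simp add: distrib_left nn_integral_add nn_integral_cmult[symmetric] mult_ac del: taboo.simps)
  also have "(\<integral>\<^sup>+z. \<integral>\<^sup>+w. ?h w * (?t z * jump_prob z w) \<partial>count_space UNIV \<partial>count_space UNIV)
      = (\<integral>\<^sup>+w. ?h w * (\<integral>\<^sup>+z. ?t z * jump_prob z w \<partial>count_space UNIV) \<partial>count_space UNIV)"
    by (subst nn_integral_count_space_swap) (simp add: nn_integral_cmult)
  also have "\<dots> = (\<integral>\<^sup>+w. taboo x0 T (Suc m) w * holding_time T n w \<partial>count_space UNIV)"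
    by (simp add: mult_ac)
  also have "\<dots> = (\<Sum>j<n. \<integral>\<^sup>+z. taboo x0 T (Suc m + j) z * ennreal (1 / jump_rate \<Gamma> z) \<partial>count_space UNIV)"
    by (rule Suc.IH)
  finally show ?case
    by (subst sum.lessThan_Suc_shift) (simp del: taboo.simps)
qed simp

lemma holding_time_le_Lyapunov:
  assumes "Lyapunov_on T H" "y \<in> T"
  shows "holding_time T n y \<le> H y"
  using assms(2)
proof (induction n arbitrary: y)
  case (Suc n)
  have "(\<integral>\<^sup>+z. jump_prob y z * indicator T z * holding_time T n z \<partial>count_space UNIV)
      \<le> (\<integral>\<^sup>+z. jump_prob y z * H z \<partial>count_space UNIV)"
    using Suc.IH by (intro nn_integral_mono) (auto split: split_indicator intro: mult_left_mono)
  then show ?case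
    using assms(1) Suc.prems unfolding Lyapunov_on_def
    by (simp del: taboo.simps) (meson add_left_mono order_trans)
qed simp

lemma taboo_holding_sum_le_Lyapunov:
  assumes "Lyapunov_on T H" "x0 \<in> T"
  shows "(\<Sum>j. \<integral>\<^sup>+z. taboo x0 T j z * ennreal (1 / jump_rate \<Gamma> z) \<partial>count_space UNIV) \<le> H x0"
proof (rule suminf_le_const)
  fix n
  have "(\<Sum>j<n. \<integral>\<^sup>+z. taboo x0 T j z * ennreal (1 / jump_rate \<Gamma> z) \<partial>count_space UNIV)
      = holding_time T n x0"
    using taboo_holding_time[of x0 T 0 n]
    by (simp add: nn_integral_count_space_indicator_singleton)
  also have "\<dots> \<le> H x0" by (rule holding_time_le_Lyapunov[OF assms])
  finally show "(\<Sum>j<n. \<integral>\<^sup>+z. taboo x0 T j z * ennreal (1 / jump_rate \<Gamma> z) \<partial>count_space UNIV) \<le> H x0" .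
qed simp

lemma taboo_returns_finite:
  assumes "Lyapunov_on T H" "x0 \<in> T" "H x0 < \<top>"
  shows "(\<Sum>j. taboo x0 T j x0) < \<top>"
proof -
  define c where "c = ennreal (1 / jump_rate \<Gamma> x0)"
  have "c * taboo x0 T j x0
      = (\<integral>\<^sup>+z. indicator {x0} z * (taboo x0 T j z * ennreal (1 / jump_rate \<Gamma> z)) \<partial>count_space UNIV)" for j
    by (simp add: nn_integral_count_space_indicator_singleton c_def mult.commute del: taboo.simps)
  also have "\<dots> j \<le> (\<integral>\<^sup>+z. taboo x0 T j z * ennreal (1 / jump_rate \<Gamma> z) \<partial>count_space UNIV)" for j
    by (intro nn_integral_mono) (auto split: split_indicator)
  finally have "c * (\<Sum>j. taboo x0 T j x0)
      \<le> (\<Sum>j. \<integral>\<^sup>+z. taboo x0 T j z * ennreal (1 / jump_rate \<Gamma> z) \<partial>count_space UNIV)"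
    by (subst ennreal_suminf_cmult[symmetric]) (intro suminf_le summableI)
  also have "\<dots> \<le> H x0" by (rule taboo_holding_sum_le_Lyapunov[OF assms(1,2)])
  finally have "c * (\<Sum>j. taboo x0 T j x0) < \<top>" using assms(3) by (simp add: le_less_trans)
  moreover have "c \<noteq> 0" using jump_rate_pos[of x0] by (simp add: c_def)
  ultimately show ?thesis
    by (metis ennreal_mult_eq_top_iff top.not_eq_extremum)
qed

lemma taboo_mass_le_convolution:
  assumes "x0 \<in> T"
  shows "(\<integral>\<^sup>+z. taboo x0 T n z \<partial>count_space UNIV)
    \<le> (\<Sum>j\<le>n. taboo x0 T j x0 * (\<integral>\<^sup>+z. taboo x0 (- {x0}) (n - j) z \<partial>count_space UNIV))"
proof -
  have "(\<integral>\<^sup>+z. taboo x0 T n z \<partial>count_space UNIV)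
      = (\<Sum>j\<le>n. taboo x0 T j x0 * (\<integral>\<^sup>+z. taboo x0 (T - {x0}) (n - j) z \<partial>count_space UNIV))"
    by (subst taboo_last_visit[OF assms]) (simp add: nn_integral_sum nn_integral_cmult del: taboo.simps)
  also have "\<dots> \<le> (\<Sum>j\<le>n. taboo x0 T j x0 * (\<integral>\<^sup>+z. taboo x0 (- {x0}) (n - j) z \<partial>count_space UNIV))"
    by (intro sum_mono mult_left_mono nn_integral_mono taboo_mono_set) auto
  finally show ?thesis .
qed

text \<open>Recurrence enters here: the chain cannot stay in \<open>T\<close> forever, since it would return to
  \<open>x0\<close> infinitely often, whereas the expected number of such returns is finite.\<close>

lemma taboo_mass_tendsto_0:
  assumes "Lyapunov_on T H" "x0 \<in> T" "H x0 < \<top>"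
    and recurrent: "(\<Sum>n. first_passage \<Gamma> n x0 x0) = 1"
  shows "(\<lambda>n. \<integral>\<^sup>+z. taboo x0 T n z \<partial>count_space UNIV) \<longlonglongrightarrow> 0"
proof (rule tendsto_sandwich[OF _ _ tendsto_const])
  show "(\<lambda>n. \<Sum>j\<le>n. taboo x0 T j x0 * (\<integral>\<^sup>+z. taboo x0 (- {x0}) (n - j) z \<partial>count_space UNIV)) \<longlonglongrightarrow> 0"
    using taboo_returns_finite[OF assms(1-3)] taboo_avoid_mass_le_1
      taboo_avoid_mass_tendsto_0[OF recurrent]
    by (rule ennreal_convolution_tendsto_0)
qed (auto intro!: always_eventually taboo_mass_le_convolution[OF assms(2)])

lemma nn_integral_jump_prob_add_const:
  "(\<integral>\<^sup>+z. jump_prob y z * (h z + k) \<partial>count_space UNIV)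
   = (\<integral>\<^sup>+z. jump_prob y z * h z \<partial>count_space UNIV) + k"
  by (simp add: distrib_left nn_integral_add nn_integral_multc jump_prob_row_sum)

lemma mean_after_jump_le:
  assumes dom: "in_Dom_plus \<Gamma> f" and c: "0 < c" and gen: "gen_apply \<Gamma> f y \<le> - c"
  shows "ennreal (1 / jump_rate \<Gamma> y) + (\<integral>\<^sup>+z. jump_prob y z * ennreal (f z / c) \<partial>count_space UNIV)
       \<le> ennreal (f y / c)"
proof -
  define \<gamma> where "\<gamma> = jump_rate \<Gamma> y"
  define Sf where "Sf = (\<Sum>\<^sub>\<infinity>z\<in>UNIV - {y}. \<Gamma> y z * f z)"
  have f_nonneg: "0 \<le> f z" for z
    using dom by (simp add: in_Dom_plus_def)
  have summable: "(\<lambda>z. \<Gamma> y z * f z) summable_on (UNIV - {y})"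
    using dom f_nonneg by (simp add: in_Dom_plus_def in_Dom_def)
  have "(\<integral>\<^sup>+z. jump_prob y z * ennreal (f z / c) \<partial>count_space UNIV)
      = (\<integral>\<^sup>+z. ennreal (jumpP \<Gamma> y z * (f z * (1 / c))) \<partial>count_space UNIV)"
    unfolding jump_prob_def using jumpP_nonneg
    by (intro nn_integral_cong) (simp add: ennreal_mult'[symmetric])
  also have "\<dots> = ennreal ((\<Sum>\<^sub>\<infinity>z\<in>UNIV - {y}. \<Gamma> y z * (f z * (1 / c))) / \<gamma>)"
    unfolding \<gamma>_def
  proof (rule nn_integral_jumpP)
    show "(\<lambda>z. \<Gamma> y z * (f z * (1 / c))) summable_on (UNIV - {y})"
      using summable_on_cmult_left[OF summable, of "1 / c"] by (simp add: mult.assoc)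
  qed (use f_nonneg c in simp)
  also have "(\<Sum>\<^sub>\<infinity>z\<in>UNIV - {y}. \<Gamma> y z * (f z * (1 / c))) = Sf / c"
    unfolding Sf_def using infsum_cmult_left[of "1 / c" "\<lambda>z. \<Gamma> y z * f z"] summable
    by (simp add: mult.assoc)
  finally have mean: "(\<integral>\<^sup>+z. jump_prob y z * ennreal (f z / c) \<partial>count_space UNIV) = ennreal (Sf / c / \<gamma>)" .
  have \<gamma>: "0 < \<gamma>" unfolding \<gamma>_def by (rule jump_rate_pos)
  have Sf_nonneg: "0 \<le> Sf"
    unfolding Sf_def using f_nonneg off_diagonal_nonneg by (intro infsum_nonneg) auto
  have "Sf - \<gamma> * f y \<le> - c"
    using gen Q unfolding gen_apply_def Sf_def \<gamma>_def is_Q_matrix_def by simp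
  have "1 / \<gamma> + Sf / c / \<gamma> = (c + Sf) / (c * \<gamma>)"
    using c \<gamma> by (simp add: field_simps)
  also have "\<dots> \<le> (\<gamma> * f y) / (c * \<gamma>)"
    using \<open>Sf - \<gamma> * f y \<le> - c\<close> c \<gamma> by (intro divide_right_mono) auto
  also have "\<dots> = f y / c"
    using \<gamma> by simp
  finally have "1 / \<gamma> + Sf / c / \<gamma> \<le> f y / c" .
  then show ?thesis
    using \<gamma> c Sf_nonneg by (simp add: mean \<gamma>_def[symmetric] ennreal_plus[symmetric] ennreal_leI del: ennreal_plus)
qed

end

section \<open>The Lyapunov function \<open>\<Phi>\<close>\<close>

locale rate_function =
  fixes g :: "real \<Rightarrow> real" and b :: real
  assumes g_mono: "mono_on {0..b} g" and g_nonneg: "\<forall>y\<in>{0..b}. 0 \<le> g y" and b_nonneg: "0 \<le> b"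
begin

text \<open>\<open>g\<close> extended to \<open>\<real>\<close> by constants, so that it is monotone, hence Borel measurable.\<close>

definition g_ext :: "real \<Rightarrow> real" where "g_ext t = g (max 0 (min b t))"

lemma g_ext_mono: "s \<le> t \<Longrightarrow> g_ext s \<le> g_ext t"
  unfolding g_ext_def using b_nonneg
  by (intro mono_onD[OF g_mono]) (auto simp: max_def min_def)

lemma g_ext_nonneg: "0 \<le> g_ext t"
  unfolding g_ext_def using g_nonneg b_nonneg by (auto simp: max_def min_def)

lemma g_ext_eq: "t \<in> {0..b} \<Longrightarrow> g_ext t = g t"
  by (auto simp: g_ext_def max_def min_def)

lemma g_ext_measurable[measurable]: "g_ext \<in> borel_measurable borel"
  by (rule borel_measurable_mono) (auto simp: mono_def g_ext_mono)

definition Phi :: "real \<Rightarrow> ennreal" where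
  "Phi u = (\<integral>\<^sup>+t. indicator {0..u} t * inverse (ennreal (g_ext t)) \<partial>lborel)"

definition Phi_between :: "real \<Rightarrow> real \<Rightarrow> ennreal" where
  "Phi_between u v = (\<integral>\<^sup>+t. indicator {u<..v} t * inverse (ennreal (g_ext t)) \<partial>lborel)"

lemma Phi_add_between: assumes "0 \<le> u" "u \<le> v" shows "Phi v = Phi u + Phi_between u v"
proof -
  have "Phi v = (\<integral>\<^sup>+t. indicator {0..u} t * inverse (ennreal (g_ext t))
                  + indicator {u<..v} t * inverse (ennreal (g_ext t)) \<partial>lborel)"
    unfolding Phi_def using assms
    by (intro nn_integral_cong) (auto split: split_indicator)
  also have "\<dots> = Phi u + Phi_between u v"
    unfolding Phi_def Phi_between_def by (rule nn_integral_add) auto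
  finally show ?thesis .
qed

lemma Phi_between_le:
  assumes "u \<le> v" "0 < g_ext u"
  shows "Phi_between u v \<le> ennreal ((v - u) / g_ext u)"
proof -
  have "Phi_between u v \<le> (\<integral>\<^sup>+t. ennreal (1 / g_ext u) * indicator {u<..v} t \<partial>lborel)"
    unfolding Phi_between_def
  proof (intro nn_integral_mono)
    fix t
    show "indicator {u<..v} t * inverse (ennreal (g_ext t)) \<le> ennreal (1 / g_ext u) * indicator {u<..v} t"
    proof (cases "t \<in> {u<..v}")
      case True
      then have "g_ext u \<le> g_ext t" by (intro g_ext_mono) auto
      then have "inverse (ennreal (g_ext t)) = ennreal (1 / g_ext t)" "1 / g_ext t \<le> 1 / g_ext u"
        using assms by (auto simp: inverse_ennreal divide_simps)
      then show ?thesis using True by (auto intro: ennreal_leI)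
    qed auto
  qed
  also have "\<dots> = ennreal ((v - u) / g_ext u)"
    using assms by (subst nn_integral_cmult_indicator) (auto simp: ennreal_mult[symmetric])
  finally show ?thesis .
qed

lemma Phi_between_ge:
  assumes "u \<le> v" "0 < g_ext v"
  shows "ennreal ((v - u) / g_ext v) \<le> Phi_between u v"
proof -
  have "ennreal ((v - u) / g_ext v) = (\<integral>\<^sup>+t. ennreal (1 / g_ext v) * indicator {u<..v} t \<partial>lborel)"
    using assms by (subst nn_integral_cmult_indicator) (auto simp: ennreal_mult[symmetric])
  also have "\<dots> \<le> Phi_between u v"
    unfolding Phi_between_def
  proof (intro nn_integral_mono)
    fix t
    show "ennreal (1 / g_ext v) * indicator {u<..v} t \<le> indicator {u<..v} t * inverse (ennreal (g_ext t))"
    proof (cases "t \<in> {u<..v} \<and> 0 < g_ext t")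
      case True
      then have "inverse (ennreal (g_ext t)) = ennreal (1 / g_ext t)" "1 / g_ext v \<le> 1 / g_ext t"
        using g_ext_mono[of t v] by (auto simp: inverse_ennreal divide_simps)
      then show ?thesis using True by (auto intro: ennreal_leI)
    next
      case False
      then show ?thesis using g_ext_nonneg[of t] by (auto split: split_indicator)
    qed
  qed
  finally show ?thesis .
qed

text \<open>The tangent inequality \<open>\<Phi>(q) \<le> \<Phi>(p) + (q - p) / g(p)\<close> of the concave function \<open>\<Phi>\<close>,
  with \<open>p / g(p)\<close> moved to the left so that no subtraction occurs in \<open>ennreal\<close>.\<close>

lemma Phi_tangent:
  assumes "0 \<le> p" "0 \<le> q" "0 < g_ext p"
  shows "Phi q + ennreal (p / g_ext p) \<le> Phi p + ennreal (q / g_ext p)"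
proof (cases "p \<le> q")
  case True
  have "ennreal ((q - p) / g_ext p) + ennreal (p / g_ext p) = ennreal (q / g_ext p)"
    using True assms by (subst ennreal_plus[symmetric]) (auto simp: diff_divide_distrib divide_right_mono)
  moreover have "Phi q + ennreal (p / g_ext p) \<le> Phi p + ennreal ((q - p) / g_ext p) + ennreal (p / g_ext p)"
    using Phi_add_between[OF assms(1) True] Phi_between_le[OF True assms(3)] by (simp add: add_mono)
  ultimately show ?thesis by (simp add: add.assoc)
next
  case False
  then have qp: "q \<le> p" by simp
  have "ennreal ((p - q) / g_ext p) + ennreal (q / g_ext p) = ennreal (p / g_ext p)"
    using qp assms by (subst ennreal_plus[symmetric]) (auto simp: diff_divide_distrib divide_right_mono)
  moreover have "Phi q + ennreal ((p - q) / g_ext p) + ennreal (q / g_ext p) \<le> Phi p + ennreal (q / g_ext p)"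
    using Phi_add_between[OF assms(2) qp] Phi_between_ge[OF qp assms(3)] by (simp add: add_mono)
  ultimately show ?thesis by (simp add: add.assoc)
qed

lemma Phi_mono: "u \<le> v \<Longrightarrow> Phi u \<le> Phi v"
  unfolding Phi_def by (intro nn_integral_mono) (auto split: split_indicator)

lemma Phi_b: "Phi b = (\<integral>\<^sup>+ y. indicator {0..b} y * inverse (ennreal (g y)) \<partial>lborel)"
  unfolding Phi_def by (intro nn_integral_cong) (auto split: split_indicator simp: g_ext_eq)

lemma g_ext_pos:
  assumes "Phi b < \<top>" "0 < u" "u \<le> b"
  shows "0 < g_ext u"
proof (rule ccontr)
  assume "\<not> 0 < g_ext u"
  then have "g_ext t = 0" if "t \<le> u" for t
    using g_ext_mono[OF that] g_ext_nonneg[of t] g_ext_nonneg[of u] by linarith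
  then have "(\<integral>\<^sup>+t. \<top> * indicator {0..u} t \<partial>lborel) \<le> Phi b"
    unfolding Phi_def using assms by (intro nn_integral_mono) (auto split: split_indicator)
  moreover have "(\<integral>\<^sup>+t. \<top> * indicator {0..u} t \<partial>lborel) = \<top>"
    using assms by (subst nn_integral_cmult_indicator) (auto simp: ennreal_top_mult)
  ultimately show False using assms(1) by (simp add: top_unique)
qed

lemma Lyapunov_on_Phi:
  assumes "Q_matrix \<Gamma>" and dom: "in_Dom_plus \<Gamma> f" and f_range: "\<forall>y. 0 < f y \<and> f y \<le> b"
    and "Phi b < \<top>" and gen: "\<forall>y\<in>T. gen_apply \<Gamma> f y \<le> - g (f y)"
  shows "Q_matrix.Lyapunov_on \<Gamma> T (\<lambda>z. Phi (f z))"
  unfolding Q_matrix.Lyapunov_on_def[OF assms(1)]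
proof
  interpret Q_matrix \<Gamma> by fact
  fix y assume "y \<in> T"
  define c where "c = g_ext (f y)"
  have fy: "0 < f y" "f y \<le> b" using f_range by auto
  have c: "0 < c" "c = g (f y)"
    unfolding c_def using g_ext_pos[OF \<open>Phi b < \<top>\<close> fy] g_ext_eq fy by auto
  let ?r = "ennreal (1 / jump_rate \<Gamma> y)"
    and ?P\<Phi> = "\<integral>\<^sup>+z. jump_prob y z * Phi (f z) \<partial>count_space UNIV"
    and ?m = "\<integral>\<^sup>+z. jump_prob y z * ennreal (f z / c) \<partial>count_space UNIV"
  have "(\<integral>\<^sup>+z. jump_prob y z * (Phi (f z) + ennreal (f y / c)) \<partial>count_space UNIV)
      \<le> (\<integral>\<^sup>+z. jump_prob y z * (ennreal (f z / c) + Phi (f y)) \<partial>count_space UNIV)"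
    using Phi_tangent[of "f y"] f_range c
    by (intro nn_integral_mono mult_left_mono) (auto simp: c_def add.commute less_imp_le)
  then have tangent: "?P\<Phi> + ennreal (f y / c) \<le> ?m + Phi (f y)"
    by (simp only: nn_integral_jump_prob_add_const)
  have mean: "?r + ?m \<le> ennreal (f y / c)"
    using mean_after_jump_le[OF dom c(1)] gen \<open>y \<in> T\<close> c(2) by simp
  have "ennreal (f y / c) + (?r + ?P\<Phi>) = (?P\<Phi> + ennreal (f y / c)) + ?r"
    by (simp add: add_ac)
  also have "\<dots> \<le> (?m + Phi (f y)) + ?r"
    using tangent by (rule add_right_mono)
  also have "\<dots> = (?r + ?m) + Phi (f y)"
    by (simp add: add_ac)
  also have "\<dots> \<le> ennreal (f y / c) + Phi (f y)"
    using mean by (rule add_right_mono)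
  finally show "?r + ?P\<Phi> \<le> Phi (f y)"
    by (simp add: ennreal_add_left_cancel_le)
qed

end

section \<open>The continuous-time chain\<close>

lemma jump_time_mono:
  assumes "\<forall>k>0. 0 < S k \<omega>" "i \<le> j"
  shows "jump_time S i \<omega> \<le> jump_time S j \<omega>"
  unfolding jump_time_def using assms by (intro sum_mono2) (auto intro: less_imp_le)

lemma hit_time_le_jump_time:
  assumes pos: "\<forall>k>0. 0 < S k \<omega>" and "X N \<omega> \<in> A"
  shows "hit_time X S A \<omega> \<le> ennreal (jump_time S N \<omega>)"
proof -
  define t where "t = jump_time S N \<omega>"
  have "0 \<le> t"
    unfolding t_def jump_time_def using pos by (intro sum_nonneg) (auto intro: less_imp_le)
  have N: "jump_time S N \<omega> \<le> t \<and> t < jump_time S (Suc N) \<omega>"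
    unfolding t_def jump_time_def using pos by simp
  have "(LEAST n. jump_time S n \<omega> \<le> t \<and> t < jump_time S (Suc n) \<omega>) = N"
  proof (rule Least_equality)
    fix m assume m: "jump_time S m \<omega> \<le> t \<and> t < jump_time S (Suc m) \<omega>"
    show "N \<le> m"
    proof (rule ccontr)
      assume "\<not> N \<le> m"
      then have "jump_time S (Suc m) \<omega> \<le> t"
        unfolding t_def using jump_time_mono[of S \<omega> "Suc m" N] pos by simp
      with m show False by simp
    qed
  qed (rule N)
  then have "ctmc_state X S t \<omega> = Some (X N \<omega>)"
    unfolding ctmc_state_def using N by auto
  then show ?thesis
    unfolding hit_time_def t_def[symmetric] using \<open>0 \<le> t\<close> \<open>X N \<omega> \<in> A\<close>
    by (intro Inf_lower) auto
qed

locale jump_process = Q_matrix \<Gamma> for \<Gamma> :: "'x::countable \<Rightarrow> 'x \<Rightarrow> real" +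
  fixes M :: "'w measure" and X :: "nat \<Rightarrow> 'w \<Rightarrow> 'x" and S :: "nat \<Rightarrow> 'w \<Rightarrow> real" and x0 :: 'x
  assumes law: "ctmc_law M X S \<Gamma> x0"
begin

lemma prob_space_M: "prob_space M"
  using law by (simp add: ctmc_law_def)

lemma X_measurable[measurable]: "X k \<in> measurable M (count_space UNIV)"
  using law by (simp add: ctmc_law_def)

lemma S_measurable[measurable]: "S k \<in> borel_measurable M"
  using law by (simp add: ctmc_law_def)

definition path_event :: "(nat \<Rightarrow> 'x set) \<Rightarrow> (nat \<Rightarrow> real) \<Rightarrow> nat \<Rightarrow> 'w set" where
  "path_event C ts n = {\<omega> \<in> space M. (\<forall>k\<le>n. X k \<omega> \<in> C k) \<and> (\<forall>k\<in>{1..n}. ts k < S k \<omega>)}"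

lemma path_event_sets[measurable]: "path_event C ts n \<in> sets M"
  unfolding path_event_def by measurable

lemma emeasure_path_event_singletons:
  assumes "\<forall>k. 0 \<le> ts k"
  shows "emeasure M (path_event (\<lambda>k. {xs k}) ts n)
    = ennreal ((if xs 0 = x0 then 1 else 0) *
          (\<Prod>k\<in>{1..n}. jumpP \<Gamma> (xs (k - 1)) (xs k) * exp (- jump_rate \<Gamma> (xs (k - 1)) * ts k)))"
proof -
  interpret prob_space M by (rule prob_space_M)
  show ?thesis
    using law assms unfolding ctmc_law_def path_event_def by (auto simp: emeasure_eq_measure)
qed

definition paths :: "(nat \<Rightarrow> 'x set) \<Rightarrow> nat \<Rightarrow> (nat \<Rightarrow> 'x) set" where
  "paths C n = {xs \<in> PiE {..n} (\<lambda>_. UNIV). \<forall>k\<le>n. xs k \<in> C k}"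

lemma countable_paths: "countable (paths C n)"
  unfolding paths_def
  by (rule countable_subset[of _ "PiE {..n} (\<lambda>_. UNIV)"]) (auto intro: countable_PiE)

lemma paths_differ:
  assumes "xs \<in> paths C n" "ys \<in> paths C n" "xs \<noteq> ys"
  obtains k where "k \<le> n" "xs k \<noteq> ys k"
proof -
  have "xs \<in> extensional {..n}" "ys \<in> extensional {..n}"
    using assms(1,2) unfolding paths_def by (auto simp: PiE_def)
  then show ?thesis
    using assms(3) that extensionalityI[of xs "{..n}" ys] by auto
qed

lemma path_event_singletons_disjoint:
  "k \<le> n \<Longrightarrow> xs k \<noteq> ys k \<Longrightarrow> path_event (\<lambda>k. {xs k}) ts n \<inter> path_event (\<lambda>k. {ys k}) ts n = {}"
  unfolding path_event_def by auto

lemma path_event_eq_UN: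
  "path_event C ts n = (\<Union>xs\<in>paths C n. path_event (\<lambda>k. {xs k}) ts n)"
proof (intro equalityI subsetI)
  fix \<omega> assume \<omega>: "\<omega> \<in> path_event C ts n"
  then have "restrict (\<lambda>k. X k \<omega>) {..n} \<in> paths C n"
    "\<omega> \<in> path_event (\<lambda>k. {restrict (\<lambda>k. X k \<omega>) {..n} k}) ts n"
    unfolding paths_def path_event_def by auto
  then show "\<omega> \<in> (\<Union>xs\<in>paths C n. path_event (\<lambda>k. {xs k}) ts n)" by blast
next
  fix \<omega> assume "\<omega> \<in> (\<Union>xs\<in>paths C n. path_event (\<lambda>k. {xs k}) ts n)"
  then obtain xs where "xs \<in> paths C n" "\<omega> \<in> path_event (\<lambda>k. {xs k}) ts n" by blast
  then show "\<omega> \<in> path_event C ts n"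
    unfolding paths_def path_event_def by auto
qed

lemma path_event_extend_eq_UN:
  "path_event (C(Suc n := {z})) (ts(Suc n := t)) (Suc n)
   = (\<Union>xs\<in>paths C n. path_event (\<lambda>k. {(xs(Suc n := z)) k}) (ts(Suc n := t)) (Suc n))"
proof (intro equalityI subsetI)
  fix \<omega> assume \<omega>: "\<omega> \<in> path_event (C(Suc n := {z})) (ts(Suc n := t)) (Suc n)"
  then have "X k \<omega> \<in> C k" if "k \<le> n" for k
    using that \<omega> unfolding path_event_def by (auto dest!: spec[of _ k])
  then have "restrict (\<lambda>k. X k \<omega>) {..n} \<in> paths C n"
    "\<omega> \<in> path_event (\<lambda>k. {((restrict (\<lambda>k. X k \<omega>) {..n})(Suc n := z)) k}) (ts(Suc n := t)) (Suc n)"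
    using \<omega> unfolding paths_def path_event_def by (auto simp: le_Suc_eq)
  then show "\<omega> \<in> (\<Union>xs\<in>paths C n. path_event (\<lambda>k. {(xs(Suc n := z)) k}) (ts(Suc n := t)) (Suc n))"
    by blast
next
  fix \<omega> assume "\<omega> \<in> (\<Union>xs\<in>paths C n. path_event (\<lambda>k. {(xs(Suc n := z)) k}) (ts(Suc n := t)) (Suc n))"
  then obtain xs where "xs \<in> paths C n"
    "\<omega> \<in> path_event (\<lambda>k. {(xs(Suc n := z)) k}) (ts(Suc n := t)) (Suc n)" by blast
  then show "\<omega> \<in> path_event (C(Suc n := {z})) (ts(Suc n := t)) (Suc n)"
    unfolding paths_def path_event_def by (auto simp: le_Suc_eq)
qed

lemma emeasure_path_event_singletons_extend:
  assumes ts: "\<forall>k. 0 \<le> ts k" and t: "0 \<le> t" and "xs n = w"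
  shows "emeasure M (path_event (\<lambda>k. {(xs(Suc n := z)) k}) (ts(Suc n := t)) (Suc n))
       = emeasure M (path_event (\<lambda>k. {xs k}) ts n) * (jump_prob w z * ennreal (exp (- jump_rate \<Gamma> w * t)))"
proof -
  define A where "A = (if xs 0 = x0 then 1 else 0 :: real)"
  define P where "P = (\<Prod>k\<in>{1..n}. jumpP \<Gamma> (xs (k - 1)) (xs k) * exp (- jump_rate \<Gamma> (xs (k - 1)) * ts k))"
  have "0 \<le> A" "0 \<le> P"
    unfolding A_def P_def by (auto intro!: prod_nonneg mult_nonneg_nonneg jumpP_nonneg)
  have "(\<Prod>k\<in>{1..Suc n}. jumpP \<Gamma> ((xs(Suc n := z)) (k - 1)) ((xs(Suc n := z)) k) *
             exp (- jump_rate \<Gamma> ((xs(Suc n := z)) (k - 1)) * (ts(Suc n := t)) k))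
        = P * (jumpP \<Gamma> w z * exp (- jump_rate \<Gamma> w * t))"
    unfolding P_def using \<open>xs n = w\<close> by (auto intro!: prod.cong)
  then have "emeasure M (path_event (\<lambda>k. {(xs(Suc n := z)) k}) (ts(Suc n := t)) (Suc n))
      = ennreal (A * P * (jumpP \<Gamma> w z * exp (- jump_rate \<Gamma> w * t)))"
    using emeasure_path_event_singletons[of "ts(Suc n := t)" "xs(Suc n := z)" "Suc n"] ts t
    by (simp add: A_def mult.assoc)
  also have "\<dots> = ennreal (A * P) * (jump_prob w z * ennreal (exp (- jump_rate \<Gamma> w * t)))"
    unfolding jump_prob_def using \<open>0 \<le> A\<close> \<open>0 \<le> P\<close> jumpP_nonneg[of w z]
    by (simp add: ennreal_mult[symmetric])
  also have "ennreal (A * P) = emeasure M (path_event (\<lambda>k. {xs k}) ts n)"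
    unfolding A_def P_def by (rule emeasure_path_event_singletons[OF ts, symmetric])
  finally show ?thesis .
qed

text \<open>The Markov property of the jump chain together with the exponential law of the holding
  times, on cylinder events whose last state is \<open>w\<close>.\<close>

lemma emeasure_path_event_extend:
  assumes ts: "\<forall>k. 0 \<le> ts k" and t: "0 \<le> t" and "C n \<subseteq> {w}"
  shows "emeasure M (path_event (C(Suc n := {z})) (ts(Suc n := t)) (Suc n))
       = emeasure M (path_event C ts n) * jump_prob w z * ennreal (exp (- jump_rate \<Gamma> w * t))"
proof -
  define c where "c = jump_prob w z * ennreal (exp (- jump_rate \<Gamma> w * t))"
  have disj1: "disjoint_family_on (\<lambda>xs. path_event (\<lambda>k. {xs k}) ts n) (paths C n)"
    unfolding disjoint_family_on_def
  proof (intro ballI impI)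
    fix xs ys assume "xs \<in> paths C n" "ys \<in> paths C n" "xs \<noteq> ys"
    then obtain k where "k \<le> n" "xs k \<noteq> ys k" by (rule paths_differ)
    then show "path_event (\<lambda>k. {xs k}) ts n \<inter> path_event (\<lambda>k. {ys k}) ts n = {}"
      by (rule path_event_singletons_disjoint)
  qed
  have disj2: "disjoint_family_on
      (\<lambda>xs. path_event (\<lambda>k. {(xs(Suc n := z)) k}) (ts(Suc n := t)) (Suc n)) (paths C n)"
    unfolding disjoint_family_on_def
  proof (intro ballI impI)
    fix xs ys assume "xs \<in> paths C n" "ys \<in> paths C n" "xs \<noteq> ys"
    then obtain k where "k \<le> n" "xs k \<noteq> ys k" by (rule paths_differ)
    then show "path_event (\<lambda>k. {(xs(Suc n := z)) k}) (ts(Suc n := t)) (Suc n)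
        \<inter> path_event (\<lambda>k. {(ys(Suc n := z)) k}) (ts(Suc n := t)) (Suc n) = {}"
      by (intro path_event_singletons_disjoint[of k]) auto
  qed
  have "emeasure M (path_event (C(Suc n := {z})) (ts(Suc n := t)) (Suc n))
      = (\<integral>\<^sup>+xs. emeasure M (path_event (\<lambda>k. {(xs(Suc n := z)) k}) (ts(Suc n := t)) (Suc n)) \<partial>count_space (paths C n))"
    unfolding path_event_extend_eq_UN by (rule emeasure_UN_countable[OF _ countable_paths disj2]) simp
  also have "\<dots> = (\<integral>\<^sup>+xs. emeasure M (path_event (\<lambda>k. {xs k}) ts n) * c \<partial>count_space (paths C n))"
    using assms unfolding c_def paths_def
    by (intro nn_integral_cong emeasure_path_event_singletons_extend) auto
  also have "\<dots> = emeasure M (path_event C ts n) * c"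
    unfolding path_event_eq_UN[of C ts n]
    by (simp add: nn_integral_multc emeasure_UN_countable[OF _ countable_paths disj1])
  finally show ?thesis by (simp add: c_def mult.assoc)
qed




definition stay_event :: "'x set \<Rightarrow> nat \<Rightarrow> 'w set" where
  "stay_event T n = {\<omega> \<in> space M. X 0 \<omega> = x0 \<and> (\<forall>k\<in>{1..n}. X k \<omega> \<in> T \<and> 0 < S k \<omega>)}"

definition taboo_event :: "'x set \<Rightarrow> nat \<Rightarrow> 'x \<Rightarrow> 'w set" where
  "taboo_event T n z = {\<omega> \<in> stay_event T n. X n \<omega> = z}"

lemma stay_event_sets[measurable]: "stay_event T n \<in> sets M"
  unfolding stay_event_def by measurable

lemma taboo_event_sets[measurable]: "taboo_event T n z \<in> sets M"
  unfolding taboo_event_def stay_event_def by measurable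

lemma disjoint_family_taboo_event: "disjoint_family (taboo_event T n)"
  unfolding disjoint_family_on_def taboo_event_def by auto

lemma stay_event_eq_UN: "stay_event T n = (\<Union>z. taboo_event T n z)"
  unfolding taboo_event_def by auto

lemma stay_event_Suc:
  "stay_event T (Suc n) = {\<omega> \<in> stay_event T n. X (Suc n) \<omega> \<in> T \<and> 0 < S (Suc n) \<omega>}"
  unfolding stay_event_def ball_atLeastAtMost_Suc by auto

lemma path_event_Suc:
  "path_event (C(Suc n := A)) (ts(Suc n := t)) (Suc n)
   = path_event C ts n \<inter> {\<omega>. X (Suc n) \<omega> \<in> A \<and> t < S (Suc n) \<omega>}"
proof -
  have "(\<forall>k\<le>n. X k \<omega> \<in> (C(Suc n := A)) k) \<longleftrightarrow> (\<forall>k\<le>n. X k \<omega> \<in> C k)"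
    "(\<forall>k\<in>{1..n}. (ts(Suc n := t)) k < S k \<omega>) \<longleftrightarrow> (\<forall>k\<in>{1..n}. ts k < S k \<omega>)" for \<omega>
    by auto
  then show ?thesis
    unfolding path_event_def ball_atMost_Suc ball_atLeastAtMost_Suc by auto
qed

definition taboo_states :: "'x set \<Rightarrow> nat \<Rightarrow> 'x \<Rightarrow> nat \<Rightarrow> 'x set" where
  "taboo_states T n w k = (if k = 0 then {x0} else T) \<inter> (if k = n then {w} else UNIV)"

lemma taboo_event_eq_path_event: "taboo_event T n w = path_event (taboo_states T n w) (\<lambda>_. 0) n"
proof -
  have "(\<forall>k\<le>n. X k \<omega> \<in> taboo_states T n w k)
      \<longleftrightarrow> X 0 \<omega> = x0 \<and> (\<forall>k\<in>{1..n}. X k \<omega> \<in> T) \<and> X n \<omega> = w" for \<omega>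
  proof
    assume H: "\<forall>k\<le>n. X k \<omega> \<in> taboo_states T n w k"
    have "X 0 \<omega> = x0" using H[rule_format, of 0] by (simp add: taboo_states_def split: if_splits)
    moreover have "X n \<omega> = w" using H[rule_format, of n] by (simp add: taboo_states_def split: if_splits)
    moreover have "X k \<omega> \<in> T" if "k \<in> {1..n}" for k
      using H[rule_format, of k] that by (simp add: taboo_states_def split: if_splits)
    ultimately show "X 0 \<omega> = x0 \<and> (\<forall>k\<in>{1..n}. X k \<omega> \<in> T) \<and> X n \<omega> = w" by blast
  qed (auto simp: taboo_states_def)
  then show ?thesis
    unfolding taboo_event_def stay_event_def path_event_def by auto
qed

lemma taboo_event_step_eq_path_event:
  "taboo_event T n w \<inter> {\<omega>. X (Suc n) \<omega> = z \<and> t < S (Suc n) \<omega>}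
   = path_event ((taboo_states T n w)(Suc n := {z})) ((\<lambda>_. 0)(Suc n := t)) (Suc n)"
  by (simp add: taboo_event_eq_path_event path_event_Suc)

lemma taboo_event_step_sets[measurable]:
  "taboo_event T n w \<inter> {\<omega>. X (Suc n) \<omega> = z \<and> t < S (Suc n) \<omega>} \<in> sets M"
  unfolding taboo_event_step_eq_path_event by (rule path_event_sets)

lemma emeasure_taboo_event_step:
  assumes "0 \<le> t"
  shows "emeasure M (taboo_event T n w \<inter> {\<omega>. X (Suc n) \<omega> = z \<and> t < S (Suc n) \<omega>})
       = emeasure M (taboo_event T n w) * jump_prob w z * ennreal (exp (- jump_rate \<Gamma> w * t))"
proof -
  have "taboo_states T n w n \<subseteq> {w}"
    by (auto simp: taboo_states_def)
  then show ?thesis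
    using emeasure_path_event_extend[of "\<lambda>_. 0" t "taboo_states T n w" n w z] assms
    by (subst taboo_event_step_eq_path_event, subst taboo_event_eq_path_event) simp
qed

lemma emeasure_taboo_event: "emeasure M (taboo_event T n z) = taboo x0 T n z"
proof (induction n arbitrary: z)
  case 0
  have "taboo_event T 0 z = (if z = x0 then path_event (\<lambda>_. {x0}) (\<lambda>_. 0) 0 else {})"
    unfolding taboo_event_def stay_event_def path_event_def by auto
  then show ?case
    using emeasure_path_event_singletons[of "\<lambda>_. 0" "\<lambda>_. x0" 0] by simp
next
  case (Suc n)
  let ?A = "\<lambda>w. taboo_event T n w \<inter> {\<omega>. X (Suc n) \<omega> = z \<and> 0 < S (Suc n) \<omega>}"
  show ?case
  proof (cases "z \<in> T")
    case False
    then have "taboo_event T (Suc n) z = {}"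
      unfolding taboo_event_def stay_event_Suc by auto
    then show ?thesis using False by simp
  next
    case True
    have eq: "taboo_event T (Suc n) z = (\<Union>w. ?A w)"
      unfolding taboo_event_def stay_event_Suc using True by auto
    have "disjoint_family ?A"
      using disjoint_family_taboo_event[of T n] by (auto simp: disjoint_family_on_def)
    then have "emeasure M (taboo_event T (Suc n) z) = (\<integral>\<^sup>+w. emeasure M (?A w) \<partial>count_space UNIV)"
      unfolding eq by (intro emeasure_UN_countable) auto
    also have "\<dots> = (\<integral>\<^sup>+w. taboo x0 T n w * jump_prob w z \<partial>count_space UNIV)"
      by (simp add: emeasure_taboo_event_step Suc.IH)
    finally show ?thesis using True by simp
  qed
qed

lemma emeasure_taboo_event_holding_gt:
  assumes "0 \<le> t"
  shows "emeasure M (taboo_event T n z \<inter> {\<omega>. t < S (Suc n) \<omega>})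
       = taboo x0 T n z * ennreal (exp (- jump_rate \<Gamma> z * t))"
proof -
  let ?A = "\<lambda>z'. taboo_event T n z \<inter> {\<omega>. X (Suc n) \<omega> = z' \<and> t < S (Suc n) \<omega>}"
  have eq: "taboo_event T n z \<inter> {\<omega>. t < S (Suc n) \<omega>} = (\<Union>z'. ?A z')"
    by auto
  have "emeasure M (taboo_event T n z \<inter> {\<omega>. t < S (Suc n) \<omega>})
      = (\<integral>\<^sup>+z'. emeasure M (?A z') \<partial>count_space UNIV)"
    unfolding eq by (intro emeasure_UN_countable) (auto simp: disjoint_family_on_def)
  also have "\<dots> = (\<integral>\<^sup>+z'. (taboo x0 T n z * ennreal (exp (- jump_rate \<Gamma> z * t))) * jump_prob z z' \<partial>count_space UNIV)"
    using assms by (simp add: emeasure_taboo_event_step emeasure_taboo_event mult_ac)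
  also have "\<dots> = taboo x0 T n z * ennreal (exp (- jump_rate \<Gamma> z * t))"
    by (simp add: nn_integral_cmult jump_prob_row_sum)
  finally show ?thesis .
qed


lemma nn_integral_holding_taboo_event:
  "(\<integral>\<^sup>+\<omega>. ennreal (S (Suc n) \<omega>) * indicator (taboo_event T n z) \<omega> \<partial>M)
   = taboo x0 T n z * ennreal (1 / jump_rate \<Gamma> z)"
proof -
  have "sigma_finite_measure M"
    using prob_space_M by (rule prob_space_imp_sigma_finite)
  then have "(\<integral>\<^sup>+\<omega>. ennreal (S (Suc n) \<omega>) * indicator (taboo_event T n z) \<omega> \<partial>M)
      = (\<integral>\<^sup>+t. ennreal (indicator {0..} t * exp (- jump_rate \<Gamma> z * t)) * taboo x0 T n z \<partial>lborel)"
    by (subst nn_integral_indicator_eq_tail_integral)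
      (auto intro!: nn_integral_cong simp: emeasure_taboo_event_holding_gt mult.commute split: split_indicator)
  also have "\<dots> = (\<integral>\<^sup>+t. ennreal (indicator {0..} t * exp (- jump_rate \<Gamma> z * t)) \<partial>lborel) * taboo x0 T n z"
    by (rule nn_integral_multc) measurable
  also have "\<dots> = taboo x0 T n z * ennreal (1 / jump_rate \<Gamma> z)"
    by (subst nn_integral_exp_neg_Ici[OF jump_rate_pos]) (simp add: mult.commute)
  finally show ?thesis .
qed

lemma indicator_stay_event:
  "indicator (stay_event T n) \<omega> = (\<integral>\<^sup>+z. indicator (taboo_event T n z) \<omega> \<partial>count_space UNIV)"
proof -
  have "indicator (taboo_event T n z) \<omega> = indicator {X n \<omega>} z * (indicator (stay_event T n) \<omega> :: ennreal)" for z
    by (auto simp: taboo_event_def split: split_indicator)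
  then show ?thesis
    by (simp add: nn_integral_count_space_indicator_singleton)
qed

lemma emeasure_stay_event: "emeasure M (stay_event T n) = (\<integral>\<^sup>+z. taboo x0 T n z \<partial>count_space UNIV)"
  unfolding stay_event_eq_UN
  by (subst emeasure_UN_countable) (auto simp: disjoint_family_taboo_event emeasure_taboo_event)

lemma nn_integral_holding_stay_event:
  "(\<integral>\<^sup>+\<omega>. ennreal (S (Suc n) \<omega>) * indicator (stay_event T n) \<omega> \<partial>M)
   = (\<integral>\<^sup>+z. taboo x0 T n z * ennreal (1 / jump_rate \<Gamma> z) \<partial>count_space UNIV)"
proof -
  have "(\<integral>\<^sup>+\<omega>. ennreal (S (Suc n) \<omega>) * indicator (stay_event T n) \<omega> \<partial>M)
      = (\<integral>\<^sup>+\<omega>. \<integral>\<^sup>+z. ennreal (S (Suc n) \<omega>) * indicator (taboo_event T n z) \<omega> \<partial>count_space UNIV \<partial>M)"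
    by (simp add: indicator_stay_event nn_integral_cmult)
  also have "\<dots> = (\<integral>\<^sup>+z. \<integral>\<^sup>+\<omega>. ennreal (S (Suc n) \<omega>) * indicator (taboo_event T n z) \<omega> \<partial>M \<partial>count_space UNIV)"
    by (rule nn_integral_count_space_nn_integral) auto
  finally show ?thesis
    by (simp add: nn_integral_holding_taboo_event)
qed

lemma AE_start_and_holding_pos: "AE \<omega> in M. X 0 \<omega> = x0 \<and> (\<forall>k>0. 0 < S k \<omega>)"
proof -
  interpret prob_space M by (rule prob_space_M)
  have "AE \<omega> in M. \<omega> \<in> stay_event UNIV n" for n
    using emeasure_stay_event[of UNIV n] taboo_UNIV_mass[of x0 n]
    by (intro AE_prob_1) (simp add: emeasure_eq_measure)
  then have "AE \<omega> in M. \<forall>n. \<omega> \<in> stay_event UNIV n"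
    by (simp add: AE_all_countable)
  then show ?thesis
  proof (rule eventually_mono)
    fix \<omega> assume stays: "\<forall>n. \<omega> \<in> stay_event UNIV n"
    have "0 < S k \<omega>" if "0 < k" for k
      using stays[rule_format, of k] that by (auto simp: stay_event_def)
    moreover have "X 0 \<omega> = x0"
      using stays[rule_format, of 0] by (simp add: stay_event_def)
    ultimately show "X 0 \<omega> = x0 \<and> (\<forall>k>0. 0 < S k \<omega>)" by blast
  qed
qed

lemma AE_leaves:
  assumes "(\<lambda>n. \<integral>\<^sup>+z. taboo x0 T n z \<partial>count_space UNIV) \<longlonglongrightarrow> 0"
  shows "AE \<omega> in M. \<exists>n. \<omega> \<notin> stay_event T n"
proof -
  have "emeasure M (\<Inter>n. stay_event T n) \<le> (\<integral>\<^sup>+z. taboo x0 T n z \<partial>count_space UNIV)" for n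
    using emeasure_mono[of "\<Inter>n. stay_event T n" "stay_event T n" M]
    by (auto simp: emeasure_stay_event)
  then have "emeasure M (\<Inter>n. stay_event T n) \<le> 0"
    using LIMSEQ_le_const[OF assms] by blast
  then have "(\<Inter>n. stay_event T n) \<in> null_sets M"
    by auto
  then show ?thesis
    by (auto dest: AE_not_in)
qed

lemma hit_time_le_holding_sum:
  assumes "\<omega> \<in> space M" "X 0 \<omega> = x0" and pos: "\<forall>k>0. 0 < S k \<omega>" and "\<omega> \<notin> stay_event T m"
  shows "hit_time X S (- T) \<omega> \<le> (\<Sum>n. ennreal (S (Suc n) \<omega>) * indicator (stay_event T n) \<omega>)"
proof -
  have stay_iff: "\<omega> \<in> stay_event T n \<longleftrightarrow> (\<forall>k\<in>{1..n}. X k \<omega> \<in> T)" for n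
    using assms(1,2) pos by (auto simp: stay_event_def)
  have "\<exists>k. 1 \<le> k \<and> X k \<omega> \<notin> T"
    using assms(4) unfolding stay_iff by auto
  define N where "N = (LEAST k. 1 \<le> k \<and> X k \<omega> \<notin> T)"
  have N: "1 \<le> N" "X N \<omega> \<notin> T"
    using LeastI_ex[OF \<open>\<exists>k. 1 \<le> k \<and> X k \<omega> \<notin> T\<close>] unfolding N_def by auto
  have "X k \<omega> \<in> T" if "1 \<le> k" "k < N" for k
    using not_less_Least[of k "\<lambda>k. 1 \<le> k \<and> X k \<omega> \<notin> T"] that unfolding N_def by auto
  then have stay_N: "\<omega> \<in> stay_event T n \<longleftrightarrow> n < N" for n
    unfolding stay_iff using N by (auto simp: not_less intro: ccontr)
  have "(\<Sum>n. ennreal (S (Suc n) \<omega>) * indicator (stay_event T n) \<omega>)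
      = (\<Sum>n<N. ennreal (S (Suc n) \<omega>) * indicator (stay_event T n) \<omega>)"
    by (rule suminf_finite) (auto simp: stay_N)
  also have "\<dots> = ennreal (\<Sum>n<N. S (Suc n) \<omega>)"
    using pos by (simp add: stay_N sum_ennreal less_imp_le)
  also have "(\<Sum>n<N. S (Suc n) \<omega>) = jump_time S N \<omega>"
    unfolding jump_time_def by (simp add: sum.atLeast1_atMost_eq)
  finally show ?thesis
    using hit_time_le_jump_time[of S \<omega> X N "- T"] pos N(2) by simp
qed

lemma nn_integral_hit_time_le:
  assumes "(\<lambda>n. \<integral>\<^sup>+z. taboo x0 T n z \<partial>count_space UNIV) \<longlonglongrightarrow> 0"
  shows "(\<integral>\<^sup>+\<omega>. hit_time X S (- T) \<omega> \<partial>M)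
       \<le> (\<Sum>n. \<integral>\<^sup>+z. taboo x0 T n z * ennreal (1 / jump_rate \<Gamma> z) \<partial>count_space UNIV)"
proof -
  have "AE \<omega> in M. hit_time X S (- T) \<omega> \<le> (\<Sum>n. ennreal (S (Suc n) \<omega>) * indicator (stay_event T n) \<omega>)"
    using AE_start_and_holding_pos AE_leaves[OF assms] AE_space
  proof eventually_elim
    fix \<omega> assume \<omega>: "X 0 \<omega> = x0 \<and> (\<forall>k>0. 0 < S k \<omega>)" "\<exists>n. \<omega> \<notin> stay_event T n" "\<omega> \<in> space M"
    then obtain m where "\<omega> \<notin> stay_event T m" by blast
    with \<omega> show "hit_time X S (- T) \<omega> \<le> (\<Sum>n. ennreal (S (Suc n) \<omega>) * indicator (stay_event T n) \<omega>)"
      by (intro hit_time_le_holding_sum) auto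
  qed
  then have "(\<integral>\<^sup>+\<omega>. hit_time X S (- T) \<omega> \<partial>M)
      \<le> (\<integral>\<^sup>+\<omega>. (\<Sum>n. ennreal (S (Suc n) \<omega>) * indicator (stay_event T n) \<omega>) \<partial>M)"
    by (rule nn_integral_mono_AE)
  also have "\<dots> = (\<Sum>n. \<integral>\<^sup>+\<omega>. ennreal (S (Suc n) \<omega>) * indicator (stay_event T n) \<omega> \<partial>M)"
    by (rule nn_integral_suminf) auto
  finally show ?thesis
    by (simp add: nn_integral_holding_stay_event)
qed

end


theorem proposition1p2:
  fixes \<Gamma> :: "'x::countable \<Rightarrow> 'x \<Rightarrow> real"
    and f :: "'x \<Rightarrow> real" and g :: "real \<Rightarrow> real"
    and a b :: real and B :: ennreal
    and M :: "'w measure" and X :: "nat \<Rightarrow> 'w \<Rightarrow> 'x" and S :: "nat \<Rightarrow> 'w \<Rightarrow> real"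
    and x :: 'x
  assumes "infinite (UNIV :: 'x set)"
    and "is_Q_matrix \<Gamma>"
    and "jump_irreducible \<Gamma>"
    and "jump_recurrent \<Gamma>"
    and "in_Dom_plus \<Gamma> f"
    and "\<forall>y. 0 < f y"
    and "bdd_above (range f)"
    and "(SUP y. f y) = b"
    and "\<forall>c. 0 < c \<and> c < b \<longrightarrow> finite {y. f y \<le> c}"
    and "mono_on {0..b} g"
    and "\<forall>y\<in>{0..b}. 0 \<le> g y"
    and "B = (\<integral>\<^sup>+ y. indicator {0..b} y * inverse (ennreal (g y)) \<partial>lborel)"
    and "B < \<top>"
    and "0 < a" and "a < b"
    and "\<forall>y. y \<notin> {z. f z \<le> a} \<longrightarrow> gen_apply \<Gamma> f y \<le> - g (f y)"
    and "x \<notin> {z. f z \<le> a}"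
    and "ctmc_law M X S \<Gamma> x"
  shows "(\<integral>\<^sup>+ \<omega>. hit_time X S {z. f z \<le> a} \<omega> \<partial>M) \<le> B"
proof -
  interpret jump_process \<Gamma> M X S x
    using assms(2,18) by unfold_locales
  interpret rate_function g b
    using assms(10,11,14,15) by unfold_locales auto
  define T where "T = - {z. f z \<le> a}"
  have f_le_b: "f y \<le> b" for y
    using cSUP_upper[OF UNIV_I assms(7)] assms(8) by simp
  have Phi_fx: "Phi (f x) \<le> B"
    using Phi_mono[OF f_le_b] Phi_b assms(12) by simp
  have Lyapunov: "Lyapunov_on T (\<lambda>z. Phi (f z))"
    using Lyapunov_on_Phi[OF Q_matrix_axioms assms(5)] assms(6,12,13,16) f_le_b Phi_b
    by (simp add: T_def)
  have "x \<in> T"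
    using assms(17) by (simp add: T_def)
  have "(\<lambda>n. \<integral>\<^sup>+z. taboo x T n z \<partial>count_space UNIV) \<longlonglongrightarrow> 0"
    using taboo_mass_tendsto_0[OF Lyapunov \<open>x \<in> T\<close>] Phi_fx assms(4,13)
    by (simp add: jump_recurrent_def le_less_trans)
  then have "(\<integral>\<^sup>+\<omega>. hit_time X S (- T) \<omega> \<partial>M)
      \<le> (\<Sum>n. \<integral>\<^sup>+z. taboo x T n z * ennreal (1 / jump_rate \<Gamma> z) \<partial>count_space UNIV)"
    by (rule nn_integral_hit_time_le)
  also have "\<dots> \<le> Phi (f x)"
    by (rule taboo_holding_sum_le_Lyapunov[OF Lyapunov \<open>x \<in> T\<close>])
  finally show ?thesis
    using Phi_fx by (simp add: T_def)
qed

end
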